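(* Let $p\ge 1$, let $\alpha\in[0,1)$ and let $g\in\mathbb{R}^p$ with $g\neq 0$. Let $m$ be an index with $|g_m|=\max_d|g_d|$, and let $I_{12}$ be the $p\times p$ diagonal matrix with $(I_{12})_{dd}=1$ if $|g_d|\ge \alpha|g_m|$ and $(I_{12})_{dd}=0$ otherwise (all off-diagonal entries zero). Define $$\Delta x_{12}:=-I_{12}g\left(\frac{\alpha}{\|I_{12}g\|_1}+\frac{1-\alpha}{\|I_{12}g\|_2}\right),\qquad q_1:=\left(\frac{\|I_{12}g\|_1}{\|I_{12}g\|_2}\right)^2,$$ $$c_\alpha(q_1):=\frac{\sqrt{q_1(\alpha^2q_1+4(1-\alpha))}-\alpha q_1}{2(1-\alpha)(\sqrt{q_1}(1-\alpha)+\alpha)}.$$ If $\Delta x_{12,c}:=c_\alpha(q_1)\cdot\Delta x_{12}$, then $h_\alpha(\Delta x_{12,c})=1$, where $h_\alpha(v):=\alpha\|v\|_1+(1-\alpha)\|v\|_2^2$ for $v\in\mathbb{R}^p$.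
   Context: $g$ plays the role of a gradient vector; $I_{12}$ selects the coordinates whose absolute gradient is at least $\alpha$ times the maximal absolute gradient; $\Delta x_{12}$ is the (non-scaled) elastic gradient descent update direction. *)

theory Defs
  imports "HOL-Analysis.Analysis"
begin

text \<open>l1 norm of a vector in R^p (index type 'n, p = CARD('n)).\<close>
definition norm1 :: "real ^ 'n \<Rightarrow> real" where
  "norm1 v = (\<Sum>i\<in>UNIV. \<bar>v $ i\<bar>)"

definition norm2 :: "real ^ 'n \<Rightarrow> real" where
  "norm2 v = norm v"

definition I12 :: "real \<Rightarrow> real ^ 'n \<Rightarrow> 'n \<Rightarrow> real ^ 'n ^ 'n" where
  "I12 \<alpha> g m = (\<chi> i j. if i = j \<and> \<bar>g $ i\<bar> \<ge> \<alpha> * \<bar>g $ m\<bar> then 1 else 0)"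

definition delta_x12 :: "real \<Rightarrow> real ^ 'n \<Rightarrow> 'n \<Rightarrow> real ^ 'n" where
  "delta_x12 \<alpha> g m =
     - ((\<alpha> / norm1 (I12 \<alpha> g m *v g) + (1 - \<alpha>) / norm2 (I12 \<alpha> g m *v g))
        *\<^sub>R (I12 \<alpha> g m *v g))"

definition q1 :: "real \<Rightarrow> real ^ 'n \<Rightarrow> 'n \<Rightarrow> real" where
  "q1 \<alpha> g m = (norm1 (I12 \<alpha> g m *v g) / norm2 (I12 \<alpha> g m *v g)) ^ 2"

definition c_alpha :: "real \<Rightarrow> real \<Rightarrow> real" where
  "c_alpha \<alpha> q = (sqrt (q * (\<alpha>^2 * q + 4 * (1 - \<alpha>))) - \<alpha> * q)
                   / (2 * (1 - \<alpha>) * (sqrt q * (1 - \<alpha>) + \<alpha>))"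

definition h_alpha :: "real \<Rightarrow> real ^ 'n \<Rightarrow> real" where
  "h_alpha \<alpha> v = \<alpha> * norm1 v + (1 - \<alpha>) * (norm2 v)^2"

end

theory Submission
  imports Defs "HOL-Library.Quadratic_Discriminant"
begin

text \<open>
  Write \<open>v = I\<^sub>1\<^sub>2 g\<close>, \<open>a = \<parallel>v\<parallel>\<^sub>1\<close>, \<open>b = \<parallel>v\<parallel>\<^sub>2\<close>, so \<open>\<surd>q\<^sub>1 = a / b\<close>. Every multiple
  \<open>r v\<close> has \<open>h\<^sub>\<alpha>(r v) = \<alpha> t + (1 - \<alpha>) t\<^sup>2 / q\<^sub>1\<close> with \<open>t = \<bar>r\<bar> a\<close>, and
  \<open>\<Delta>x\<^sub>1\<^sub>2\<close> is the multiple with \<open>t = \<surd>q\<^sub>1 (1 - \<alpha>) + \<alpha>\<close>, a factor of the denominator of \<open>c\<^sub>\<alpha>\<close>.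
  Hence scaling by \<open>c\<^sub>\<alpha>(q\<^sub>1)\<close> makes \<open>t\<close> the positive root of
  \<open>(1 - \<alpha>) t\<^sup>2 + \<alpha> q\<^sub>1 t - q\<^sub>1 = 0\<close>, i.e. \<open>h\<^sub>\<alpha> = 1\<close>. The thresholding only
  matters in that it keeps the maximal coordinate, so \<open>v \<noteq> 0\<close>.
\<close>

lemma quadratic_pos_root:
  fixes A B C :: real
  assumes "A > 0" and "C \<ge> 0"
  defines "t \<equiv> (sqrt (B\<^sup>2 + 4 * A * C) - B) / (2 * A)"
  shows "A * t\<^sup>2 + B * t = C" and "t \<ge> 0"
proof -
  have disc: "discrim A B (- C) = B\<^sup>2 + 4 * A * C"
    by (simp add: discrim_def)
  have "2 * A * t + B = sqrt (B\<^sup>2 + 4 * A * C)"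
    using assms(1) by (simp add: t_def)
  then have "(2 * A * t + B)\<^sup>2 = discrim A B (- C)"
    unfolding disc using assms by simp
  then show "A * t\<^sup>2 + B * t = C"
    using complete_square[of A t B "- C"] assms(1) by simp
  have "sqrt (B\<^sup>2) \<le> sqrt (B\<^sup>2 + 4 * A * C)"
    using assms(1,2) by (intro real_sqrt_le_mono) simp
  then have "B \<le> sqrt (B\<^sup>2 + 4 * A * C)"
    by (metis abs_ge_self order_trans real_sqrt_abs)
  then show "t \<ge> 0"
    using assms(1) by (simp add: t_def)
qed

lemma c_alpha_times_denominator:
  fixes \<alpha> q :: real
  assumes "0 \<le> \<alpha>" and "\<alpha> < 1" and "q > 0"
  defines "t \<equiv> c_alpha \<alpha> q * (sqrt q * (1 - \<alpha>) + \<alpha>)"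
  shows "(1 - \<alpha>) * t\<^sup>2 + \<alpha> * q * t = q" and "t \<ge> 0"
proof -
  have "sqrt q * (1 - \<alpha>) + \<alpha> > 0"
    using assms(1-3) by (smt (verit) mult_pos_pos real_sqrt_gt_zero)
  moreover have "q * (\<alpha>\<^sup>2 * q + 4 * (1 - \<alpha>)) = (\<alpha> * q)\<^sup>2 + 4 * (1 - \<alpha>) * q"
    by algebra
  ultimately have "t = (sqrt ((\<alpha> * q)\<^sup>2 + 4 * (1 - \<alpha>) * q) - \<alpha> * q) / (2 * (1 - \<alpha>))"
    unfolding t_def c_alpha_def by simp
  then show "(1 - \<alpha>) * t\<^sup>2 + \<alpha> * q * t = q" and "t \<ge> 0"
    using quadratic_pos_root[of "1 - \<alpha>" q "\<alpha> * q"] assms(2,3) by simp_all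
qed

lemma norm1_scaleR: "norm1 (r *\<^sub>R v) = \<bar>r\<bar> * norm1 v"
  by (simp add: norm1_def abs_mult sum_distrib_left)

lemma norm1_pos:
  assumes "v \<noteq> 0"
  shows "norm1 v > 0"
proof -
  obtain i where "v $ i \<noteq> 0"
    using assms by (metis vec_eq_iff zero_index)
  moreover have "\<bar>v $ i\<bar> \<le> norm1 v"
    unfolding norm1_def by (rule member_le_sum) auto
  ultimately show ?thesis by linarith
qed

lemma h_alpha_scaleR:
  "h_alpha \<alpha> (r *\<^sub>R v) = \<alpha> * (\<bar>r\<bar> * norm1 v) + (1 - \<alpha>) * (r * norm2 v)\<^sup>2"
  by (simp add: h_alpha_def norm1_scaleR norm2_def power_mult_distrib)

lemma h_alpha_c_alpha_step:
  fixes v :: "real ^ 'n" and \<alpha> :: real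
  assumes "0 \<le> \<alpha>" and "\<alpha> < 1" and "v \<noteq> 0"
  defines "q \<equiv> (norm1 v / norm2 v)\<^sup>2"
    and "s \<equiv> \<alpha> / norm1 v + (1 - \<alpha>) / norm2 v"
  shows "h_alpha \<alpha> (c_alpha \<alpha> q *\<^sub>R - (s *\<^sub>R v)) = 1"
proof -
  define a b where "a = norm1 v" and "b = norm2 v"
  have a: "a > 0" and b: "b > 0"
    using assms(3) norm1_pos by (auto simp: a_def b_def norm2_def)
  then have q: "q > 0" and sqrt_q: "sqrt q = a / b"
    by (simp_all add: q_def a_def b_def)
  define t where "t = c_alpha \<alpha> q * (sqrt q * (1 - \<alpha>) + \<alpha>)"
  have t_eq: "t = c_alpha \<alpha> q * s * a"
    using a b unfolding t_def s_def sqrt_q a_def b_def by (simp add: field_simps)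
  have "(1 - \<alpha>) * t\<^sup>2 + \<alpha> * q * t = q" and t: "t \<ge> 0"
    using c_alpha_times_denominator[OF assms(1,2) q] by (simp_all add: t_def)
  then have "\<alpha> * t + (1 - \<alpha>) * (t\<^sup>2 / q) = 1"
    using q by (simp add: field_simps)
  moreover have "\<bar>c_alpha \<alpha> q * s\<bar> * a = t"
    using t a by (simp add: t_eq zero_le_mult_iff)
  moreover have "(c_alpha \<alpha> q * s * b)\<^sup>2 = t\<^sup>2 / q"
    using a b by (simp add: t_eq q_def a_def b_def power_divide field_simps)
  ultimately show ?thesis
    using h_alpha_scaleR[of \<alpha> "- (c_alpha \<alpha> q * s)" v] by (simp add: a_def b_def)
qed

lemma I12_mult_vec_nth:
  "(I12 \<alpha> g m *v g) $ i = (if \<alpha> * \<bar>g $ m\<bar> \<le> \<bar>g $ i\<bar> then g $ i else 0)"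
  unfolding I12_def matrix_vector_mult_def by (simp add: if_distrib[of "\<lambda>x. x * _"] sum.delta cong: if_cong)

lemma I12_mult_vec_nonzero:
  fixes g :: "real ^ 'n"
  assumes "\<alpha> \<le> 1" and "g \<noteq> 0"
    and "\<bar>g $ m\<bar> = Max {\<bar>g $ d\<bar> | d. True}"
  shows "I12 \<alpha> g m *v g \<noteq> 0"
proof -
  obtain d where d: "g $ d \<noteq> 0"
    using assms(2) by (metis vec_eq_iff zero_index)
  have "finite {\<bar>g $ d\<bar> | d. True}"
    by (simp add: full_SetCompr_eq)
  then have "\<bar>g $ d\<bar> \<le> \<bar>g $ m\<bar>"
    unfolding assms(3) by (intro Max_ge) auto
  then have "g $ m \<noteq> 0"
    using d by auto
  moreover have "\<alpha> * \<bar>g $ m\<bar> \<le> \<bar>g $ m\<bar>"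
    using mult_right_mono[OF assms(1), of "\<bar>g $ m\<bar>"] by simp
  ultimately have "(I12 \<alpha> g m *v g) $ m \<noteq> 0"
    by (simp add: I12_mult_vec_nth)
  then show ?thesis
    by (metis zero_index)
qed

theorem theorem1:
  fixes g :: "real ^ 'n" and \<alpha> :: real and m :: 'n
  assumes "0 \<le> \<alpha>" and "\<alpha> < 1"
    and "g \<noteq> 0"
    and "\<bar>g $ m\<bar> = Max {\<bar>g $ d\<bar> | d. True}"
  shows "h_alpha \<alpha> (c_alpha \<alpha> (q1 \<alpha> g m) *\<^sub>R delta_x12 \<alpha> g m) = 1"
proof -
  have "I12 \<alpha> g m *v g \<noteq> 0"
    using I12_mult_vec_nonzero[OF _ assms(3,4)] assms(2) by simp
  then show ?thesis
    using h_alpha_c_alpha_step[OF assms(1,2)] unfolding q1_def delta_x12_def by blast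
qed

end
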